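(* Let $f:\mathbb{P}^N\to\mathbb{P}^N$ be a linear map (an automorphism of $\mathbb{P}^N$ given by an invertible $(N+1)\times(N+1)$ matrix) defined over $\bar{\mathbb{Q}}$, and assume that there is at least one point of $\mathbb{P}^N$ whose $f$-orbit is Zariski dense. Then the set $(\mathbb{P}^N)_f^{\mathrm{dense}}$ contains a non-empty Zariski open subset of $\mathbb{P}^N$.
   Context: For a point $P$, $\mathcal{O}_f(P)=\{f^n(P):n\ge 0\}$ is its forward $f$-orbit, and $(\mathbb{P}^N)_f^{\mathrm{dense}}$ denotes the set of points $P\in\mathbb{P}^N$ whose orbit $\mathcal{O}_f(P)$ is Zariski dense in $\mathbb{P}^N$. *)

theory Defs
  imports Complex_Main "HOL-Computational_Algebra.Polynomial"
begin

text \<open>Q-bar is modelled as the algebraic complex numbers.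
Points of P^N(Q-bar) are represented by nonzero homogeneous coordinate vectors
x :: nat => complex with algebraic coordinates x 0, ..., x N (and x i = 0 for i > N).\<close>

definition qbar_vec :: "nat \<Rightarrow> (nat \<Rightarrow> complex) \<Rightarrow> bool" where
  "qbar_vec N x \<longleftrightarrow> (\<forall>i\<le>N. algebraic (x i)) \<and> (\<forall>i>N. x i = 0)"

definition proj_pts :: "nat \<Rightarrow> (nat \<Rightarrow> complex) set" where
  "proj_pts N = {x. qbar_vec N x \<and> (\<exists>i\<le>N. x i \<noteq> 0)}"

inductive qbar_poly :: "nat \<Rightarrow> ((nat \<Rightarrow> complex) \<Rightarrow> complex) \<Rightarrow> bool" for N where
  const: "algebraic c \<Longrightarrow> qbar_poly N (\<lambda>x. c)"
| var: "i \<le> N \<Longrightarrow> qbar_poly N (\<lambda>x. x i)"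
| add: "qbar_poly N p \<Longrightarrow> qbar_poly N q \<Longrightarrow> qbar_poly N (\<lambda>x. p x + q x)"
| mult: "qbar_poly N p \<Longrightarrow> qbar_poly N q \<Longrightarrow> qbar_poly N (\<lambda>x. p x * q x)"

text \<open>Homogeneous polynomials of degree d (over an infinite field, a polynomial function
satisfying p(c x) = c^d p(x) for all scalars c is exactly a homogeneous polynomial of degree d).\<close>
definition homog_poly :: "nat \<Rightarrow> ((nat \<Rightarrow> complex) \<Rightarrow> complex) \<Rightarrow> bool" where
  "homog_poly N p \<longleftrightarrow> qbar_poly N p \<and>
     (\<exists>d::nat. \<forall>c x. p (\<lambda>i. c * x i) = c ^ d * p x)"

definition zariski_zero :: "nat \<Rightarrow> ((nat \<Rightarrow> complex) \<Rightarrow> complex) set \<Rightarrow> (nat \<Rightarrow> complex) set" where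
  "zariski_zero N F = {x \<in> proj_pts N. \<forall>p\<in>F. p x = 0}"

definition zariski_closed :: "nat \<Rightarrow> (nat \<Rightarrow> complex) set \<Rightarrow> bool" where
  "zariski_closed N Z \<longleftrightarrow> (\<exists>F. (\<forall>p\<in>F. homog_poly N p) \<and> Z = zariski_zero N F)"

definition zariski_open :: "nat \<Rightarrow> (nat \<Rightarrow> complex) set \<Rightarrow> bool" where
  "zariski_open N U \<longleftrightarrow> U \<subseteq> proj_pts N \<and> zariski_closed N (proj_pts N - U)"

definition zariski_dense :: "nat \<Rightarrow> (nat \<Rightarrow> complex) set \<Rightarrow> bool" where
  "zariski_dense N S \<longleftrightarrow> (\<forall>Z. zariski_closed N Z \<and> S \<subseteq> Z \<longrightarrow> Z = proj_pts N)"

definition mat_apply :: "nat \<Rightarrow> (nat \<Rightarrow> nat \<Rightarrow> complex) \<Rightarrow> (nat \<Rightarrow> complex) \<Rightarrow> (nat \<Rightarrow> complex)" where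
  "mat_apply N A x = (\<lambda>i. if i \<le> N then (\<Sum>j\<le>N. A i j * x j) else 0)"

definition qbar_invertible :: "nat \<Rightarrow> (nat \<Rightarrow> nat \<Rightarrow> complex) \<Rightarrow> bool" where
  "qbar_invertible N A \<longleftrightarrow> (\<forall>i\<le>N. \<forall>j\<le>N. algebraic (A i j)) \<and>
     (\<exists>B. (\<forall>i\<le>N. \<forall>j\<le>N. algebraic (B i j)) \<and>
          (\<forall>i\<le>N. \<forall>k\<le>N. (\<Sum>j\<le>N. A i j * B j k) = (if i = k then 1 else 0)) \<and>
          (\<forall>i\<le>N. \<forall>k\<le>N. (\<Sum>j\<le>N. B i j * A j k) = (if i = k then 1 else 0)))"

definition orbit :: "('a \<Rightarrow> 'a) \<Rightarrow> 'a \<Rightarrow> 'a set" where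
  "orbit f P = {(f ^^ n) P | n. True}"

definition dense_orbit_pts :: "nat \<Rightarrow> ((nat \<Rightarrow> complex) \<Rightarrow> (nat \<Rightarrow> complex)) \<Rightarrow> (nat \<Rightarrow> complex) set" where
  "dense_orbit_pts N f = {P \<in> proj_pts N. zariski_dense N (orbit f P)}"

end

theory Submission
  imports Defs "HOL-Algebra.Algebraic_Closure_Type" "Jordan_Normal_Form.Determinant"
begin

text \<open>Let \<open>v\<close> be a coordinate vector of a point with dense orbit under \<open>A\<close>. If the Krylov
  matrix \<open>K(v)\<close>, with columns \<open>v, A v, ..., A\<^sup>N v\<close>, were singular, all vectors \<open>A\<^sup>j v\<close> would
  lie in one hyperplane, and so would the orbit; hence \<open>v\<close> is a cyclic vector. Cyclicity of \<open>x\<close>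
  means \<open>det K(x) \<noteq> 0\<close>, and \<open>det K(x)\<close> is a homogeneous polynomial in \<open>x\<close>, so the cyclic points
  form a Zariski open set containing the given point. For a cyclic \<open>w\<close>, solve \<open>K(v) c = w\<close> and put
  \<open>G = \<Sum>\<^sub>k c\<^sub>k A\<^sup>k\<close>: then \<open>G\<close> commutes with \<open>A\<close>, maps \<open>v\<close> to \<open>w\<close>, and is invertible because
  \<open>G K(v) = K(w)\<close>. So the orbit of \<open>w\<close> is the image of the orbit of \<open>v\<close> under a linear
  automorphism, hence dense as well. All matrices are taken over the field of algebraic numbers,
  so that composing with \<open>G\<close> preserves polynomials with algebraic coefficients.\<close>

section \<open>The field of algebraic numbers\<close>

no_notation Formal_Power_Series.fps_nth (infixl \<open>$\<close> 75)

abbreviation complex_ring :: "complex ring" where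
  "complex_ring \<equiv> ring_of_type_algebra"

lemma complex_ring_simps [simp]:
  "carrier complex_ring = UNIV" "mult complex_ring x y = x * y" "add complex_ring x y = x + y"
  "one complex_ring = 1" "zero complex_ring = 0"
  by (simp_all add: ring_of_type_algebra_def)

lemma complex_ring_eval: "ring.eval complex_ring l x = poly (Poly (rev l)) x"
proof (induct l)
  case (Cons a l)
  interpret field complex_ring by (rule field_from_type_algebra)
  have "x [^]\<^bsub>complex_ring\<^esub> length l = x ^ length l"
    by (induct l) (simp_all add: ring_of_type_algebra_def nat_pow_def)
  with Cons show ?case by (simp add: Poly_snoc poly_monom)
qed (simp add: ring.eval.simps(1) cring.axioms(1) cring_from_type_algebra)

lemma subfield_Rats_complex: "subfield (\<rat>::complex set) complex_ring"
proof -
  interpret field complex_ring by (rule field_from_type_algebra)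
  show ?thesis
  proof (rule subfieldI'[OF subringI])
    fix h1 h2 :: complex assume h: "h1 \<in> \<rat>" "h2 \<in> \<rat>"
    have "\<ominus>\<^bsub>complex_ring\<^esub> h1 = - h1" by (rule minus_equality) auto
    with h show "\<ominus>\<^bsub>complex_ring\<^esub> h1 \<in> \<rat>" by simp
    show "h1 \<otimes>\<^bsub>complex_ring\<^esub> h2 \<in> \<rat>" "h1 \<oplus>\<^bsub>complex_ring\<^esub> h2 \<in> \<rat>" using h by simp_all
  next
    fix k :: complex assume k: "k \<in> \<rat> - {\<zero>\<^bsub>complex_ring\<^esub>}"
    have "inv\<^bsub>complex_ring\<^esub> k = inverse k" by (rule comm_inv_char) (use k in auto)
    with k show "inv\<^bsub>complex_ring\<^esub> k \<in> \<rat>" by simp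
  qed auto
qed

text \<open>HOL-Algebra stores polynomials as coefficient lists with the leading coefficient first.\<close>
lemma algebraic_iff_algebraic_over_Rats:
  "algebraic x \<longleftrightarrow> (ring.algebraic complex_ring over \<rat>) x"
proof -
  interpret C: field complex_ring by (rule field_from_type_algebra)
  have "(\<exists>p. (\<forall>i. poly.coeff p i \<in> \<rat>) \<and> p \<noteq> 0 \<and> poly p x = 0) \<longleftrightarrow>
        (\<exists>l. l \<in> carrier (\<rat>[X]\<^bsub>complex_ring\<^esub>) \<and> l \<noteq> [] \<and> C.eval l x = 0)"
  proof
    assume "\<exists>p. (\<forall>i. poly.coeff p i \<in> \<rat>) \<and> p \<noteq> 0 \<and> poly p x = 0"
    then obtain p where p: "\<forall>i. poly.coeff p i \<in> \<rat>" "p \<noteq> 0" "poly p x = 0" by blast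
    have "set (coeffs p) \<subseteq> \<rat>" using p(1) by (auto simp: coeffs_def)
    moreover have "hd (rev (coeffs p)) \<noteq> 0"
      using p(2) by (simp add: hd_rev last_coeffs_eq_coeff_degree)
    ultimately show "\<exists>l. l \<in> carrier (\<rat>[X]\<^bsub>complex_ring\<^esub>) \<and> l \<noteq> [] \<and> C.eval l x = 0"
      using p by (intro exI[of _ "rev (coeffs p)"])
        (simp add: univ_poly_def polynomial_def complex_ring_eval)
  next
    assume "\<exists>l. l \<in> carrier (\<rat>[X]\<^bsub>complex_ring\<^esub>) \<and> l \<noteq> [] \<and> C.eval l x = 0"
    then obtain l where l: "l \<in> carrier (\<rat>[X]\<^bsub>complex_ring\<^esub>)" "l \<noteq> []" "C.eval l x = 0"
      by blast
    have "set l \<subseteq> \<rat>" "hd l \<noteq> 0"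
      using l(1,2) by (auto simp: univ_poly_def polynomial_def)
    then have "\<forall>i. poly.coeff (Poly (rev l)) i \<in> \<rat>" "Poly (rev l) \<noteq> 0"
      using l(2) by (auto simp: nth_default_def rev_nth hd_conv_nth
          dest!: arg_cong[where f = "\<lambda>p. poly.coeff p (length l - 1)"])
    then show "\<exists>p. (\<forall>i. poly.coeff p i \<in> \<rat>) \<and> p \<noteq> 0 \<and> poly p x = 0"
      using l(3) complex_ring_eval by metis
  qed
  then show ?thesis
    unfolding algebraic_altdef
    using C.algebraicE[OF subfieldE(1)[OF subfield_Rats_complex], of x] C.algebraicI[of _ \<rat> x]
    by auto
qed

lemma algebraic_add_mult:
  fixes x y :: complex
  assumes "algebraic x" "algebraic y"
  shows "algebraic (x + y)" "algebraic (x * y)"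
proof -
  interpret C: field complex_ring by (rule field_from_type_algebra)
  let ?Alg = "{z \<in> carrier complex_ring. (C.algebraic over \<rat>) z}"
  have "subring ?Alg complex_ring"
    by (rule subfieldE(1)[OF C.subfield_of_algebraics[OF subfield_Rats_complex]])
  moreover have "x \<in> ?Alg" "y \<in> ?Alg"
    using assms by (simp_all add: algebraic_iff_algebraic_over_Rats)
  ultimately have "x + y \<in> ?Alg" "x * y \<in> ?Alg"
    using subringE(6,7) by fastforce+
  then show "algebraic (x + y)" "algebraic (x * y)"
    by (simp_all add: algebraic_iff_algebraic_over_Rats)
qed

typedef alg = "{x :: complex. algebraic x}" morphisms of_alg Abs_alg
  by (rule exI[of _ 0]) simp

setup_lifting type_definition_alg

instantiation alg :: field
begin
lift_definition zero_alg :: alg is 0 by simp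
lift_definition one_alg :: alg is 1 by simp
lift_definition plus_alg :: "alg \<Rightarrow> alg \<Rightarrow> alg" is "(+)" by (rule algebraic_add_mult)
lift_definition uminus_alg :: "alg \<Rightarrow> alg" is uminus by auto
lift_definition minus_alg :: "alg \<Rightarrow> alg \<Rightarrow> alg" is "(-)"
  by (metis algebraic_add_mult(1) algebraic_minus diff_conv_add_uminus)
lift_definition times_alg :: "alg \<Rightarrow> alg \<Rightarrow> alg" is "(*)" by (rule algebraic_add_mult)
lift_definition inverse_alg :: "alg \<Rightarrow> alg" is inverse by auto
lift_definition divide_alg :: "alg \<Rightarrow> alg \<Rightarrow> alg" is "(/)"
  by (metis algebraic_add_mult(2) algebraic_inverse divide_inverse)
instance
  by standard (transfer; simp add: field_simps)+
end

lemma algebraic_of_alg [simp]: "algebraic (of_alg a)"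
  using of_alg by simp

lemma of_alg_Abs_alg [simp]: "algebraic x \<Longrightarrow> of_alg (Abs_alg x) = x"
  by (simp add: Abs_alg_inverse)

interpretation of_alg_hom: field_hom of_alg
  by unfold_locales (transfer, simp)+

lemma of_alg_eq_0_iff [simp]: "of_alg a = 0 \<longleftrightarrow> a = 0"
  by (metis of_alg_hom.hom_zero of_alg_inject)

section \<open>Points as vectors over the algebraic numbers\<close>

definition pt_of_vec :: "alg vec \<Rightarrow> nat \<Rightarrow> complex" where
  "pt_of_vec v = (\<lambda>i. if i < dim_vec v then of_alg (v $ i) else 0)"

text \<open>\<^const>\<open>Abs_alg\<close> is unspecified on transcendental numbers, so \<open>vec_of_pt\<close> is only
  meaningful on \<^term>\<open>proj_pts N\<close>.\<close>
definition vec_of_pt :: "nat \<Rightarrow> (nat \<Rightarrow> complex) \<Rightarrow> alg vec" where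
  "vec_of_pt n x = vec n (\<lambda>i. Abs_alg (x i))"

definition of_alg_mat :: "alg mat \<Rightarrow> nat \<Rightarrow> nat \<Rightarrow> complex" where
  "of_alg_mat M = (\<lambda>i j. of_alg (M $$ (i, j)))"

definition lin_form :: "alg vec \<Rightarrow> (nat \<Rightarrow> complex) \<Rightarrow> complex" where
  "lin_form l x = (\<Sum>i<dim_vec l. of_alg (l $ i) * x i)"

lemma pt_of_vec_in_proj_pts:
  assumes "v \<in> carrier_vec (Suc N)" "v \<noteq> 0\<^sub>v (Suc N)"
  shows "pt_of_vec v \<in> proj_pts N"
proof -
  obtain i where "i < Suc N" "v $ i \<noteq> 0"
    using assms by (metis carrier_vecD eq_vecI index_zero_vec)
  with assms(1) show ?thesis
    by (auto simp: proj_pts_def qbar_vec_def pt_of_vec_def intro!: exI[of _ i])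
qed

lemma pt_of_vec_of_pt: "x \<in> proj_pts N \<Longrightarrow> pt_of_vec (vec_of_pt (Suc N) x) = x"
  by (auto simp: proj_pts_def qbar_vec_def pt_of_vec_def vec_of_pt_def fun_eq_iff less_Suc_eq_le)

lemma vec_of_pt_carrier [simp]: "vec_of_pt n x \<in> carrier_vec n"
  by (simp add: vec_of_pt_def)

lemma vec_of_pt_nonzero:
  assumes "x \<in> proj_pts N"
  shows "vec_of_pt (Suc N) x \<noteq> 0\<^sub>v (Suc N)"
proof
  assume "vec_of_pt (Suc N) x = 0\<^sub>v (Suc N)"
  then have "x = pt_of_vec (0\<^sub>v (Suc N))"
    using pt_of_vec_of_pt[OF assms] by simp
  with assms show False
    by (auto simp: proj_pts_def pt_of_vec_def)
qed

lemma lin_form_pt_of_vec: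
  assumes "l \<in> carrier_vec n" "v \<in> carrier_vec n"
  shows "lin_form l (pt_of_vec v) = of_alg (l \<bullet> v)"
  using assms by (simp add: lin_form_def pt_of_vec_def scalar_prod_def atLeast0LessThan
      of_alg_hom.hom_sum of_alg_hom.hom_mult)

lemma mat_apply_eq_lin_form:
  assumes "M \<in> carrier_mat (Suc N) (Suc N)" "i \<le> N"
  shows "mat_apply N (of_alg_mat M) x i = lin_form (row M i) x"
  using assms by (simp add: mat_apply_def of_alg_mat_def lin_form_def lessThan_Suc_atMost)

lemma mat_apply_pt_of_vec:
  assumes "M \<in> carrier_mat (Suc N) (Suc N)" "v \<in> carrier_vec (Suc N)"
  shows "mat_apply N (of_alg_mat M) (pt_of_vec v) = pt_of_vec (M *\<^sub>v v)"
proof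
  fix i
  show "mat_apply N (of_alg_mat M) (pt_of_vec v) i = pt_of_vec (M *\<^sub>v v) i"
  proof (cases "i \<le> N")
    case True
    with assms have "mat_apply N (of_alg_mat M) (pt_of_vec v) i = lin_form (row M i) (pt_of_vec v)"
      by (simp add: mat_apply_eq_lin_form)
    also have "\<dots> = of_alg (row M i \<bullet> v)"
      using assms True row_carrier_vec[of i "Suc N" M "Suc N"] by (intro lin_form_pt_of_vec) auto
    finally show ?thesis
      using assms True by (simp add: pt_of_vec_def)
  qed (use assms in \<open>simp add: mat_apply_def pt_of_vec_def\<close>)
qed

lemma funpow_mat_apply_pt_of_vec:
  assumes "M \<in> carrier_mat (Suc N) (Suc N)" "v \<in> carrier_vec (Suc N)"
  shows "(mat_apply N (of_alg_mat M) ^^ k) (pt_of_vec v) = pt_of_vec ((M ^\<^sub>m k) *\<^sub>v v)"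
  using assms(2)
proof (induct k arbitrary: v)
  case (Suc k)
  then have "(mat_apply N (of_alg_mat M) ^^ Suc k) (pt_of_vec v) = pt_of_vec ((M ^\<^sub>m k) *\<^sub>v (M *\<^sub>v v))"
    using assms(1) by (simp add: funpow_Suc_right mat_apply_pt_of_vec del: funpow.simps)
  also have "(M ^\<^sub>m k) *\<^sub>v (M *\<^sub>v v) = (M ^\<^sub>m Suc k) *\<^sub>v v"
    using assms(1) Suc(2) by (simp add: assoc_mult_mat_vec[symmetric, of _ "Suc N" "Suc N" _ "Suc N"])
  finally show ?case .
qed (use assms in simp)

lemma orbit_pt_of_vec:
  assumes "M \<in> carrier_mat (Suc N) (Suc N)" "v \<in> carrier_vec (Suc N)"
  shows "orbit (mat_apply N (of_alg_mat M)) (pt_of_vec v) = range (\<lambda>k. pt_of_vec ((M ^\<^sub>m k) *\<^sub>v v))"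
  using funpow_mat_apply_pt_of_vec[OF assms] by (simp add: orbit_def full_SetCompr_eq)

section \<open>Polynomial functions and Zariski density\<close>

lemma qbar_poly_sum:
  "finite S \<Longrightarrow> (\<And>s. s \<in> S \<Longrightarrow> qbar_poly N (f s)) \<Longrightarrow> qbar_poly N (\<lambda>x. \<Sum>s\<in>S. f s x)"
proof (induct S rule: finite_induct)
  case empty
  show ?case using qbar_poly.const[of 0 N] by simp
next
  case (insert a S)
  then show ?case using qbar_poly.add[of N "f a" "\<lambda>x. \<Sum>s\<in>S. f s x"] by simp
qed

lemma qbar_poly_prod:
  "finite S \<Longrightarrow> (\<And>s. s \<in> S \<Longrightarrow> qbar_poly N (f s)) \<Longrightarrow> qbar_poly N (\<lambda>x. \<Prod>s\<in>S. f s x)"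
proof (induct S rule: finite_induct)
  case empty
  show ?case using qbar_poly.const[of 1 N] by simp
next
  case (insert a S)
  then show ?case using qbar_poly.mult[of N "f a" "\<lambda>x. \<Prod>s\<in>S. f s x"] by simp
qed

lemma qbar_poly_compose:
  assumes "qbar_poly N p" and "\<And>i. i \<le> N \<Longrightarrow> qbar_poly N (\<lambda>x. L x i)"
  shows "qbar_poly N (\<lambda>x. p (L x))"
  using assms by induct (auto intro: qbar_poly.intros)

lemma qbar_poly_det:
  assumes "\<And>i j. i < n \<Longrightarrow> j < n \<Longrightarrow> qbar_poly N (\<lambda>x. E x i j)"
  shows "qbar_poly N (\<lambda>x. det (mat n n (\<lambda>(i, j). E x i j)))"
proof -
  have "(\<lambda>x. det (mat n n (\<lambda>(i, j). E x i j))) =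
      (\<lambda>x. \<Sum>p\<in>{p. p permutes {0..<n}}. signof p * (\<Prod>i\<in>{0..<n}. E x i (p i)))"
    by (rule ext, subst det_def'[of _ n]) (auto simp: permutes_in_image intro!: sum.cong prod.cong)
  then show ?thesis
    using assms
    by (simp only:, intro qbar_poly_sum qbar_poly.mult qbar_poly.const qbar_poly_prod finite_permutations)
      (auto simp: permutes_in_image)
qed

lemma homog_poly_lin_form:
  assumes "l \<in> carrier_vec (Suc N)"
  shows "homog_poly N (lin_form l)"
  unfolding homog_poly_def
proof
  show "qbar_poly N (lin_form l)"
    using assms unfolding lin_form_def
    by (intro qbar_poly_sum qbar_poly.mult qbar_poly.const qbar_poly.var) auto
  have "lin_form l (\<lambda>i. c * x i) = c ^ 1 * lin_form l x" for c x
    by (simp add: lin_form_def sum_distrib_left mult_ac)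
  then show "\<exists>d. \<forall>c x. lin_form l (\<lambda>i. c * x i) = c ^ d * lin_form l x"
    by blast
qed

lemma mat_apply_scale: "mat_apply N B (\<lambda>i. c * x i) = (\<lambda>i. c * mat_apply N B x i)"
  by (auto simp: mat_apply_def sum_distrib_left mult_ac)

lemma homog_poly_compose_linear:
  assumes "homog_poly N p" and M: "M \<in> carrier_mat (Suc N) (Suc N)"
  shows "homog_poly N (\<lambda>x. p (mat_apply N (of_alg_mat M) x))"
  unfolding homog_poly_def
proof
  have lin: "qbar_poly N (\<lambda>x. mat_apply N (of_alg_mat M) x i)" if "i \<le> N" for i
    using that M homog_poly_lin_form[of "row M i" N] row_carrier_vec[of i "Suc N" M "Suc N"]
    by (simp add: mat_apply_eq_lin_form homog_poly_def less_Suc_eq_le)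
  show "qbar_poly N (\<lambda>x. p (mat_apply N (of_alg_mat M) x))"
    by (rule qbar_poly_compose[OF _ lin]) (use assms(1) in \<open>simp_all add: homog_poly_def\<close>)
  from assms(1) obtain d where "\<forall>c x. p (\<lambda>i. c * x i) = c ^ d * p x"
    by (auto simp: homog_poly_def)
  then have "p (mat_apply N (of_alg_mat M) (\<lambda>i. c * x i)) = c ^ d * p (mat_apply N (of_alg_mat M) x)"
    for c x by (simp add: mat_apply_scale)
  then show "\<exists>d. \<forall>c x. p (mat_apply N (of_alg_mat M) (\<lambda>i. c * x i)) =
      c ^ d * p (mat_apply N (of_alg_mat M) x)"
    by blast
qed

lemma zariski_denseI:
  assumes "\<And>p. homog_poly N p \<Longrightarrow> \<forall>y\<in>S. p y = 0 \<Longrightarrow> \<forall>y\<in>proj_pts N. p y = 0"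
  shows "zariski_dense N S"
  unfolding zariski_dense_def zariski_closed_def zariski_zero_def
  using assms by blast

lemma zariski_denseD:
  assumes "zariski_dense N S" "S \<subseteq> proj_pts N" "homog_poly N p" "\<forall>y\<in>S. p y = 0"
    and "y \<in> proj_pts N"
  shows "p y = 0"
proof -
  have "zariski_closed N (zariski_zero N {p})"
    unfolding zariski_closed_def using assms(3) by blast
  moreover have "S \<subseteq> zariski_zero N {p}"
    using assms(2,4) by (auto simp: zariski_zero_def)
  ultimately have "zariski_zero N {p} = proj_pts N"
    using assms(1) unfolding zariski_dense_def by blast
  with assms(5) show ?thesis by (auto simp: zariski_zero_def)
qed

section \<open>Krylov matrices\<close>

lemma pow_mat_add:
  assumes "M \<in> carrier_mat n n"
  shows "M ^\<^sub>m j * M ^\<^sub>m k = M ^\<^sub>m (j + k)"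
proof (induct k)
  case (Suc k)
  with assms show ?case
    by (simp add: assoc_mult_mat[symmetric, of _ n n _ n _ n])
qed (use assms in simp)

lemma pow_mat_commute:
  assumes "A \<in> carrier_mat n n" "M \<in> carrier_mat n n" "A * M = M * A"
  shows "A * M ^\<^sub>m k = M ^\<^sub>m k * A"
proof (induct k)
  case (Suc k)
  have "A * M ^\<^sub>m Suc k = (A * M ^\<^sub>m k) * M"
    using assms by (simp add: assoc_mult_mat[of _ n n _ n _ n])
  also have "\<dots> = M ^\<^sub>m k * (A * M)"
    using assms Suc by (simp add: assoc_mult_mat[of _ n n _ n _ n])
  also have "\<dots> = M ^\<^sub>m Suc k * A"
    using assms by (simp add: assoc_mult_mat[of _ n n _ n _ n])
  finally show ?case .
qed (use assms in simp)

lemma det_pow_mat: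
  assumes "M \<in> carrier_mat n n"
  shows "det (M ^\<^sub>m k) = det M ^ k"
  by (induct k) (use assms in \<open>simp_all add: det_mult[of _ n]\<close>)

lemma pow_mat_mult_vec_nonzero:
  fixes M :: "'a :: field mat"
  assumes "M \<in> carrier_mat n n" "det M \<noteq> 0" "v \<in> carrier_vec n" "v \<noteq> 0\<^sub>v n"
  shows "(M ^\<^sub>m k) *\<^sub>v v \<noteq> 0\<^sub>v n"
  using assms det_0_iff_vec_prod_zero_field[of "M ^\<^sub>m k" n] by (auto simp: det_pow_mat)

lemma mult_mat_vec_solvable:
  fixes A :: "'a :: field mat"
  assumes "A \<in> carrier_mat n n" "det A \<noteq> 0" "w \<in> carrier_vec n"
  obtains c where "c \<in> carrier_vec n" "A *\<^sub>v c = w"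
proof -
  obtain B where B: "B \<in> carrier_mat n n" "A * B = 1\<^sub>m n"
    using det_non_zero_imp_unit[OF assms(1,2), of "()"] by (auto simp: Units_def ring_mat_simps)
  with assms have "A *\<^sub>v (B *\<^sub>v w) = w"
    by (simp add: assoc_mult_mat_vec[symmetric, of _ n n _ n])
  with B assms(3) show ?thesis
    by (intro that[of "B *\<^sub>v w"]) auto
qed

lemma exists_nonzero_orthogonal_vec:
  fixes ws :: "nat \<Rightarrow> 'a :: field vec"
  assumes "m < n" "\<And>k. k < m \<Longrightarrow> ws k \<in> carrier_vec n"
  obtains l where "l \<in> carrier_vec n" "l \<noteq> 0\<^sub>v n" "\<And>k. k < m \<Longrightarrow> l \<bullet> ws k = 0"
proof -
  define r where "r k = (if k < m then ws k else 0\<^sub>v n)" for k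
  define R where "R = mat\<^sub>r n n (\<lambda>k. if k = n - 1 then 0\<^sub>v n else r k)"
  have r: "r k \<in> carrier_vec n" for k
    using assms(2) by (simp add: r_def)
  have R: "R \<in> carrier_mat n n"
    by (simp add: R_def)
  have "det R = 0"
    unfolding R_def using assms(1) r by (intro det_row_0) auto
  then obtain l where l: "l \<in> carrier_vec n" "l \<noteq> 0\<^sub>v n" "R *\<^sub>v l = 0\<^sub>v n"
    using det_0_iff_vec_prod_zero_field[OF R] by blast
  have "l \<bullet> ws k = 0" if "k < m" for k
  proof -
    have "row R k = ws k"
      unfolding R_def using that assms by (subst row_mat_of_row_fun) (auto simp: r_def)
    then have "ws k \<bullet> l = (R *\<^sub>v l) $ k"
      using that assms(1) R by simp
    with that assms l show ?thesis
      by (simp add: comm_scalar_prod[of _ n])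
  qed
  with l that show ?thesis by blast
qed

lemma linear_recurrence_vanishes:
  fixes u c :: "nat \<Rightarrow> 'a :: field"
  assumes "c m \<noteq> 0" "\<And>j. (\<Sum>k\<le>m. c k * u (j + k)) = 0" "\<And>j. j < m \<Longrightarrow> u j = 0"
  shows "u j = 0"
proof (induct j rule: less_induct)
  case (less j)
  show ?case
  proof (cases "j < m")
    case False
    then obtain i where j: "j = i + m"
      by (metis add.commute le_add_diff_inverse not_less)
    have "(\<Sum>k<m. c k * u (i + k)) = 0"
      using less j by (intro sum.neutral) auto
    with assms(2)[of i] have "c m * u j = 0"
      by (simp add: j lessThan_Suc_atMost[symmetric] add.commute)
    with assms(1) show ?thesis by simp
  qed (rule assms(3))
qed

definition krylov_mat :: "'a :: semiring_1 mat \<Rightarrow> 'a vec \<Rightarrow> 'a mat" where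
  "krylov_mat M v = mat (dim_row M) (dim_row M) (\<lambda>(i, k). ((M ^\<^sub>m k) *\<^sub>v v) $ i)"

lemma krylov_mat_carrier [simp]: "M \<in> carrier_mat n n \<Longrightarrow> krylov_mat M v \<in> carrier_mat n n"
  by (simp add: krylov_mat_def)

lemma col_krylov_mat:
  assumes "M \<in> carrier_mat n n" "v \<in> carrier_vec n" "k < n"
  shows "col (krylov_mat M v) k = (M ^\<^sub>m k) *\<^sub>v v"
  using assms by (intro eq_vecI) (auto simp: krylov_mat_def)

lemma scalar_prod_mult_mat_vec:
  fixes B :: "'a :: comm_semiring_0 mat"
  assumes "B \<in> carrier_mat m n" "l \<in> carrier_vec m" "c \<in> carrier_vec n"
  shows "l \<bullet> (B *\<^sub>v c) = (\<Sum>k<n. c $ k * (l \<bullet> col B k))"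
proof -
  have "l \<bullet> (B *\<^sub>v c) = (\<Sum>i<m. \<Sum>k<n. l $ i * (B $$ (i, k) * c $ k))"
    using assms by (simp add: scalar_prod_def atLeast0LessThan sum_distrib_left)
  also have "\<dots> = (\<Sum>k<n. \<Sum>i<m. l $ i * (B $$ (i, k) * c $ k))"
    by (rule sum.swap)
  also have "\<dots> = (\<Sum>k<n. c $ k * (l \<bullet> col B k))"
    using assms by (simp add: scalar_prod_def atLeast0LessThan sum_distrib_left mult_ac)
  finally show ?thesis .
qed

lemma last_nonzero_index:
  assumes "c \<in> carrier_vec n" "c \<noteq> 0\<^sub>v n"
  obtains m where "m < n" "c $ m \<noteq> 0" "\<And>k. m < k \<Longrightarrow> k < n \<Longrightarrow> c $ k = 0"
proof -
  let ?S = "{k. k < n \<and> c $ k \<noteq> 0}"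
  have "?S \<noteq> {}"
  proof
    assume "?S = {}"
    then have "c = 0\<^sub>v n"
      using assms(1) by (intro eq_vecI) auto
    with assms(2) show False by simp
  qed
  then have "Max ?S \<in> ?S"
    by (intro Max_in) simp_all
  moreover have "c $ k = 0" if "Max ?S < k" "k < n" for k
  proof (rule ccontr)
    assume "c $ k \<noteq> 0"
    with that(2) have "k \<le> Max ?S"
      by (intro Max_ge) simp_all
    with that(1) show False by simp
  qed
  ultimately show ?thesis
    using that by blast
qed

lemma krylov_kernel_shift:
  fixes M :: "'a :: comm_semiring_1 mat"
  assumes M: "M \<in> carrier_mat n n" and v: "v \<in> carrier_vec n" and c: "c \<in> carrier_vec n"
    and kernel: "krylov_mat M v *\<^sub>v c = 0\<^sub>v n" and l: "l \<in> carrier_vec n"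
  shows "(\<Sum>k<n. c $ k * (l \<bullet> ((M ^\<^sub>m (j + k)) *\<^sub>v v))) = 0"
proof -
  let ?K = "krylov_mat M v"
  have "col (M ^\<^sub>m j * ?K) k = (M ^\<^sub>m (j + k)) *\<^sub>v v" if k: "k < n" for k
  proof -
    have "col (M ^\<^sub>m j * ?K) k = (M ^\<^sub>m j) *\<^sub>v ((M ^\<^sub>m k) *\<^sub>v v)"
      using col_mult2[OF pow_carrier_mat[OF M] krylov_mat_carrier[OF M] k]
      by (simp only: col_krylov_mat[OF M v k])
    also have "\<dots> = (M ^\<^sub>m (j + k)) *\<^sub>v v"
      using assoc_mult_mat_vec[OF pow_carrier_mat[OF M] pow_carrier_mat[OF M] v, of j k]
      by (simp add: pow_mat_add[OF M])
    finally show ?thesis .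
  qed
  then have "(\<Sum>k<n. c $ k * (l \<bullet> ((M ^\<^sub>m (j + k)) *\<^sub>v v))) =
      (\<Sum>k<n. c $ k * (l \<bullet> col (M ^\<^sub>m j * ?K) k))"
    by simp
  also have "\<dots> = l \<bullet> ((M ^\<^sub>m j * ?K) *\<^sub>v c)"
    using mult_carrier_mat[OF pow_carrier_mat[OF M] krylov_mat_carrier[OF M]]
    by (rule scalar_prod_mult_mat_vec[OF _ l c, symmetric])
  also have "\<dots> = l \<bullet> ((M ^\<^sub>m j) *\<^sub>v (?K *\<^sub>v c))"
    using M c by (simp add: assoc_mult_mat_vec[of _ n n _ n])
  also have "\<dots> = l \<bullet> 0\<^sub>v n"
    using M kernel by (intro arg_cong[where f = "(\<bullet>) l"] eq_vecI) (auto simp: scalar_prod_def)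
  also have "\<dots> = 0"
    using l by simp
  finally show ?thesis .
qed

text \<open>With \<open>c\<close> in the kernel of the Krylov matrix and \<open>c $ m\<close> its last nonzero entry, the
  numbers \<open>l \<bullet> M\<^sup>j v\<close> satisfy a linear recurrence of order \<open>m\<close>; an \<open>l\<close> orthogonal to the
  first \<open>m\<close> of the vectors \<open>M\<^sup>j v\<close> therefore annihilates all of them.\<close>
lemma krylov_mat_det_zero_imp_annihilator:
  fixes M :: "'a :: field mat"
  assumes M: "M \<in> carrier_mat n n" and v: "v \<in> carrier_vec n"
    and det: "det (krylov_mat M v) = 0"
  obtains l where "l \<in> carrier_vec n" "l \<noteq> 0\<^sub>v n" "\<And>j. l \<bullet> ((M ^\<^sub>m j) *\<^sub>v v) = 0"
proof -
  obtain c where c: "c \<in> carrier_vec n" "c \<noteq> 0\<^sub>v n" "krylov_mat M v *\<^sub>v c = 0\<^sub>v n"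
    using det det_0_iff_vec_prod_zero_field[of "krylov_mat M v" n] M by auto
  obtain m where m: "m < n" "c $ m \<noteq> 0" "\<And>k. m < k \<Longrightarrow> k < n \<Longrightarrow> c $ k = 0"
    using last_nonzero_index[OF c(1,2)] by blast
  have Mkv: "(M ^\<^sub>m k) *\<^sub>v v \<in> carrier_vec n" for k
    using M v by (meson mult_mat_vec_carrier pow_carrier_mat)
  obtain l where l: "l \<in> carrier_vec n" "l \<noteq> 0\<^sub>v n" "\<And>k. k < m \<Longrightarrow> l \<bullet> ((M ^\<^sub>m k) *\<^sub>v v) = 0"
    by (rule exists_nonzero_orthogonal_vec[OF m(1), of "\<lambda>k. (M ^\<^sub>m k) *\<^sub>v v"])
      (simp_all add: Mkv)
  define u where "u j = l \<bullet> ((M ^\<^sub>m j) *\<^sub>v v)" for j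
  have recurrence: "(\<Sum>k\<le>m. c $ k * u (j + k)) = 0" for j
  proof -
    have "(\<Sum>k\<le>m. c $ k * u (j + k)) = (\<Sum>k<n. c $ k * u (j + k))"
      using m by (intro sum.mono_neutral_left) (auto simp: not_le)
    also have "\<dots> = 0"
      unfolding u_def by (rule krylov_kernel_shift[OF M v c(1,3) l(1)])
    finally show ?thesis .
  qed
  have "u j = 0" for j
    by (rule linear_recurrence_vanishes[of "\<lambda>k. c $ k" m u, OF m(2) recurrence]) (simp add: u_def l(3))
  then show ?thesis
    by (intro that[OF l(1,2)]) (simp add: u_def)
qed

definition poly_eval_mat :: "'a :: semiring_1 mat \<Rightarrow> 'a vec \<Rightarrow> 'a mat" where
  "poly_eval_mat M c =
     mat (dim_row M) (dim_row M) (\<lambda>(i, j). \<Sum>k<dim_vec c. c $ k * (M ^\<^sub>m k) $$ (i, j))"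

lemma poly_eval_mat_carrier [simp]: "M \<in> carrier_mat n n \<Longrightarrow> poly_eval_mat M c \<in> carrier_mat n n"
  by (simp add: poly_eval_mat_def)

lemma index_poly_eval_mat_mult:
  assumes "M \<in> carrier_mat n n" "B \<in> carrier_mat n n" "i < n" "j < n"
  shows "(poly_eval_mat M c * B) $$ (i, j) = (\<Sum>k<dim_vec c. c $ k * (M ^\<^sub>m k * B) $$ (i, j))"
proof -
  have "(poly_eval_mat M c * B) $$ (i, j) =
      (\<Sum>l<n. (\<Sum>k<dim_vec c. c $ k * (M ^\<^sub>m k) $$ (i, l)) * B $$ (l, j))"
    using assms by (simp add: poly_eval_mat_def scalar_prod_def atLeast0LessThan)
  also have "\<dots> = (\<Sum>k<dim_vec c. c $ k * (\<Sum>l<n. (M ^\<^sub>m k) $$ (i, l) * B $$ (l, j)))"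
    unfolding sum_distrib_left sum_distrib_right by (subst sum.swap) (simp add: mult.assoc)
  also have "\<dots> = (\<Sum>k<dim_vec c. c $ k * (M ^\<^sub>m k * B) $$ (i, j))"
    using assms by (simp add: scalar_prod_def atLeast0LessThan)
  finally show ?thesis .
qed

lemma index_mult_poly_eval_mat:
  fixes M :: "'a :: comm_semiring_1 mat"
  assumes "M \<in> carrier_mat n n" "B \<in> carrier_mat n n" "i < n" "j < n"
  shows "(B * poly_eval_mat M c) $$ (i, j) = (\<Sum>k<dim_vec c. c $ k * (B * M ^\<^sub>m k) $$ (i, j))"
proof -
  have "(B * poly_eval_mat M c) $$ (i, j) =
      (\<Sum>l<n. B $$ (i, l) * (\<Sum>k<dim_vec c. c $ k * (M ^\<^sub>m k) $$ (l, j)))"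
    using assms by (simp add: poly_eval_mat_def scalar_prod_def atLeast0LessThan)
  also have "\<dots> = (\<Sum>k<dim_vec c. c $ k * (\<Sum>l<n. B $$ (i, l) * (M ^\<^sub>m k) $$ (l, j)))"
    unfolding sum_distrib_left by (subst sum.swap) (simp add: mult_ac)
  also have "\<dots> = (\<Sum>k<dim_vec c. c $ k * (B * M ^\<^sub>m k) $$ (i, j))"
    using assms by (simp add: scalar_prod_def atLeast0LessThan)
  finally show ?thesis .
qed

lemma poly_eval_mat_commute:
  fixes M :: "'a :: comm_semiring_1 mat"
  assumes M: "M \<in> carrier_mat n n"
  shows "poly_eval_mat M c * M = M * poly_eval_mat M c"
proof (rule eq_matI)
  fix i j assume "i < dim_row (M * poly_eval_mat M c)" "j < dim_col (M * poly_eval_mat M c)"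
  then have i: "i < n" and j: "j < n"
    using M by (simp_all add: poly_eval_mat_def)
  have "(poly_eval_mat M c * M) $$ (i, j) = (\<Sum>k<dim_vec c. c $ k * (M ^\<^sub>m k * M) $$ (i, j))"
    by (rule index_poly_eval_mat_mult[OF M M i j])
  also have "\<dots> = (\<Sum>k<dim_vec c. c $ k * (M * M ^\<^sub>m k) $$ (i, j))"
    by (simp only: pow_mat_commute[OF M M refl, symmetric])
  also have "\<dots> = (M * poly_eval_mat M c) $$ (i, j)"
    by (rule index_mult_poly_eval_mat[OF M M i j, symmetric])
  finally show "(poly_eval_mat M c * M) $$ (i, j) = (M * poly_eval_mat M c) $$ (i, j)" .
qed (use M in \<open>simp_all add: poly_eval_mat_def\<close>)

lemma poly_eval_mat_mult_vec:
  fixes M :: "'a :: comm_semiring_1 mat"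
  assumes M: "M \<in> carrier_mat n n" and v: "v \<in> carrier_vec n" and c: "c \<in> carrier_vec n"
  shows "poly_eval_mat M c *\<^sub>v v = krylov_mat M v *\<^sub>v c"
proof (rule eq_vecI)
  fix i assume "i < dim_vec (krylov_mat M v *\<^sub>v c)"
  then have i: "i < n" using M by (simp add: krylov_mat_def)
  have "(poly_eval_mat M c *\<^sub>v v) $ i = (\<Sum>j<n. (\<Sum>k<n. c $ k * (M ^\<^sub>m k) $$ (i, j)) * v $ j)"
    using M v c i by (simp add: poly_eval_mat_def scalar_prod_def atLeast0LessThan)
  also have "\<dots> = (\<Sum>k<n. (\<Sum>j<n. (M ^\<^sub>m k) $$ (i, j) * v $ j) * c $ k)"
    unfolding sum_distrib_left sum_distrib_right by (subst sum.swap) (simp add: mult_ac)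
  also have "\<dots> = (krylov_mat M v *\<^sub>v c) $ i"
    using M v c i by (simp add: krylov_mat_def scalar_prod_def atLeast0LessThan)
  finally show "(poly_eval_mat M c *\<^sub>v v) $ i = (krylov_mat M v *\<^sub>v c) $ i" .
qed (use M in \<open>simp add: poly_eval_mat_def krylov_mat_def\<close>)

lemma krylov_mat_commute:
  assumes M: "M \<in> carrier_mat n n" and G: "G \<in> carrier_mat n n" and v: "v \<in> carrier_vec n"
    and comm: "G * M = M * G"
  shows "G * krylov_mat M v = krylov_mat M (G *\<^sub>v v)"
proof (rule mat_col_eqI)
  fix k assume "k < dim_col (krylov_mat M (G *\<^sub>v v))"
  then have k: "k < n" using M by (simp add: krylov_mat_def)
  have Gv: "G *\<^sub>v v \<in> carrier_vec n"
    using G v by simp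
  have "col (G * krylov_mat M v) k = G *\<^sub>v ((M ^\<^sub>m k) *\<^sub>v v)"
    using col_mult2[OF G krylov_mat_carrier[OF M] k] by (simp only: col_krylov_mat[OF M v k])
  also have "\<dots> = (G * M ^\<^sub>m k) *\<^sub>v v"
    using assoc_mult_mat_vec[OF G pow_carrier_mat[OF M] v, of k] by simp
  also have "\<dots> = (M ^\<^sub>m k * G) *\<^sub>v v"
    by (simp only: pow_mat_commute[OF G M comm])
  also have "\<dots> = col (krylov_mat M (G *\<^sub>v v)) k"
    using assoc_mult_mat_vec[OF pow_carrier_mat[OF M] G v, of k] col_krylov_mat[OF M Gv k] by simp
  finally show "col (G * krylov_mat M v) k = col (krylov_mat M (G *\<^sub>v v)) k" .
qed (use M G in \<open>simp_all add: krylov_mat_def\<close>)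

section \<open>Cyclic vectors and dense orbits\<close>

lemma lin_form_vanishing_on_dense:
  assumes "zariski_dense N S" "S \<subseteq> proj_pts N" "l \<in> carrier_vec (Suc N)"
    and "\<forall>x\<in>S. lin_form l x = 0"
  shows "l = 0\<^sub>v (Suc N)"
proof (rule eq_vecI)
  fix i assume "i < dim_vec (0\<^sub>v (Suc N) :: alg vec)"
  then have i: "i < Suc N" by simp
  let ?e = "unit_vec (Suc N) i :: alg vec"
  have "pt_of_vec ?e \<in> proj_pts N"
    using i by (intro pt_of_vec_in_proj_pts) auto
  then have "lin_form l (pt_of_vec ?e) = 0"
    using zariski_denseD[OF assms(1,2) homog_poly_lin_form[OF assms(3)]] assms(4) by blast
  moreover have "lin_form l (pt_of_vec ?e) = of_alg (l $ i)"
    using assms(3) i by (simp add: lin_form_pt_of_vec[of _ "Suc N"])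
  ultimately show "l $ i = 0\<^sub>v (Suc N) $ i"
    using i by simp
qed (use assms(3) in simp)

lemma zariski_dense_linear_image:
  assumes G: "G \<in> carrier_mat (Suc N) (Suc N)" "det G \<noteq> 0"
    and S: "zariski_dense N S" "S \<subseteq> proj_pts N"
  shows "zariski_dense N (mat_apply N (of_alg_mat G) ` S)"
proof (rule zariski_denseI)
  fix p assume p: "homog_poly N p" "\<forall>y\<in>mat_apply N (of_alg_mat G) ` S. p y = 0"
  have pG: "p (mat_apply N (of_alg_mat G) x) = 0" if "x \<in> proj_pts N" for x
    using zariski_denseD[OF S homog_poly_compose_linear[OF p(1) G(1)]] p(2) that by blast
  show "\<forall>y\<in>proj_pts N. p y = 0"
  proof
    fix y assume y: "y \<in> proj_pts N"
    obtain w where w: "w \<in> carrier_vec (Suc N)" "G *\<^sub>v w = vec_of_pt (Suc N) y"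
      using mult_mat_vec_solvable[OF G vec_of_pt_carrier] by blast
    have "w \<noteq> 0\<^sub>v (Suc N)"
    proof
      assume "w = 0\<^sub>v (Suc N)"
      then have "G *\<^sub>v w = 0\<^sub>v (Suc N)"
        using G(1) by (intro eq_vecI) auto
      with w(2) vec_of_pt_nonzero[OF y] show False by simp
    qed
    with w(1) have "pt_of_vec w \<in> proj_pts N"
      by (rule pt_of_vec_in_proj_pts)
    moreover have "mat_apply N (of_alg_mat G) (pt_of_vec w) = y"
      using mat_apply_pt_of_vec[OF G(1) w(1)] w(2) pt_of_vec_of_pt[OF y] by simp
    ultimately show "p y = 0"
      using pG by blast
  qed
qed

lemma orbit_pt_of_vec_commuting:
  assumes M: "M \<in> carrier_mat (Suc N) (Suc N)" and G: "G \<in> carrier_mat (Suc N) (Suc N)"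
    and comm: "G * M = M * G" and v: "v \<in> carrier_vec (Suc N)"
  shows "orbit (mat_apply N (of_alg_mat M)) (pt_of_vec (G *\<^sub>v v)) =
    mat_apply N (of_alg_mat G) ` orbit (mat_apply N (of_alg_mat M)) (pt_of_vec v)"
proof -
  have "pt_of_vec ((M ^\<^sub>m k) *\<^sub>v (G *\<^sub>v v)) =
      mat_apply N (of_alg_mat G) (pt_of_vec ((M ^\<^sub>m k) *\<^sub>v v))" for k
  proof -
    have "(M ^\<^sub>m k) *\<^sub>v (G *\<^sub>v v) = (M ^\<^sub>m k * G) *\<^sub>v v"
      using assoc_mult_mat_vec[OF pow_carrier_mat[OF M] G v, of k] by simp
    also have "\<dots> = (G * M ^\<^sub>m k) *\<^sub>v v"
      by (simp only: pow_mat_commute[OF G M comm])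
    also have "\<dots> = G *\<^sub>v ((M ^\<^sub>m k) *\<^sub>v v)"
      using assoc_mult_mat_vec[OF G pow_carrier_mat[OF M] v, of k] by simp
    finally show ?thesis
      using mat_apply_pt_of_vec[OF G mult_mat_vec_carrier[OF pow_carrier_mat[OF M] v]] by simp
  qed
  moreover have "G *\<^sub>v v \<in> carrier_vec (Suc N)"
    using G v by simp
  ultimately show ?thesis
    by (simp add: orbit_pt_of_vec[OF M v] orbit_pt_of_vec[OF M] image_image)
qed

definition krylov_det :: "nat \<Rightarrow> alg mat \<Rightarrow> (nat \<Rightarrow> complex) \<Rightarrow> complex" where
  "krylov_det N M x = det (mat (Suc N) (Suc N) (\<lambda>(i, k). mat_apply N (of_alg_mat (M ^\<^sub>m k)) x i))"

lemma homog_poly_krylov_det: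
  assumes M: "M \<in> carrier_mat (Suc N) (Suc N)"
  shows "homog_poly N (krylov_det N M)"
  unfolding homog_poly_def
proof
  have "qbar_poly N (\<lambda>x. mat_apply N (of_alg_mat (M ^\<^sub>m k)) x i)" if "i < Suc N" for i k
    using that homog_poly_lin_form[of "row (M ^\<^sub>m k) i" N]
      row_carrier_vec[OF that pow_carrier_mat[OF M]]
      mat_apply_eq_lin_form[OF pow_carrier_mat[OF M], of i]
    by (simp add: homog_poly_def)
  then show "qbar_poly N (krylov_det N M)"
    unfolding krylov_det_def by (intro qbar_poly_det) auto
  have "mat (Suc N) (Suc N) (\<lambda>(i, k). mat_apply N (of_alg_mat (M ^\<^sub>m k)) (\<lambda>i. c * x i) i) =
      c \<cdot>\<^sub>m mat (Suc N) (Suc N) (\<lambda>(i, k). mat_apply N (of_alg_mat (M ^\<^sub>m k)) x i)" for c x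
    by (rule eq_matI) (simp_all add: mat_apply_scale)
  then have "krylov_det N M (\<lambda>i. c * x i) = c ^ Suc N * krylov_det N M x" for c x
    by (simp add: krylov_det_def)
  then show "\<exists>d. \<forall>c x. krylov_det N M (\<lambda>i. c * x i) = c ^ d * krylov_det N M x"
    by blast
qed

lemma krylov_det_pt_of_vec:
  assumes M: "M \<in> carrier_mat (Suc N) (Suc N)" and v: "v \<in> carrier_vec (Suc N)"
  shows "krylov_det N M (pt_of_vec v) = of_alg (det (krylov_mat M v))"
proof -
  have "mat (Suc N) (Suc N) (\<lambda>(i, k). mat_apply N (of_alg_mat (M ^\<^sub>m k)) (pt_of_vec v) i) =
      map_mat of_alg (krylov_mat M v)"
    using M v mat_apply_pt_of_vec[OF pow_carrier_mat[OF M] v]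
    by (intro eq_matI) (simp_all add: krylov_mat_def pt_of_vec_def)
  then show ?thesis
    by (simp add: krylov_det_def)
qed

context
  fixes N :: nat and M :: "alg mat"
  assumes M: "M \<in> carrier_mat (Suc N) (Suc N)" and det_M: "det M \<noteq> 0"
begin

lemma orbit_subset_proj_pts:
  assumes "v \<in> carrier_vec (Suc N)" "v \<noteq> 0\<^sub>v (Suc N)"
  shows "orbit (mat_apply N (of_alg_mat M)) (pt_of_vec v) \<subseteq> proj_pts N"
  using pt_of_vec_in_proj_pts[OF mult_mat_vec_carrier[OF pow_carrier_mat[OF M] assms(1)]]
    pow_mat_mult_vec_nonzero[OF M det_M assms]
  by (auto simp: orbit_pt_of_vec[OF M assms(1)])

lemma dense_orbit_imp_krylov_det_nonzero:
  assumes v: "v \<in> carrier_vec (Suc N)" "v \<noteq> 0\<^sub>v (Suc N)"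
    and dense: "zariski_dense N (orbit (mat_apply N (of_alg_mat M)) (pt_of_vec v))"
  shows "det (krylov_mat M v) \<noteq> 0"
proof
  assume "det (krylov_mat M v) = 0"
  then obtain l where l: "l \<in> carrier_vec (Suc N)" "l \<noteq> 0\<^sub>v (Suc N)"
    "\<And>j. l \<bullet> ((M ^\<^sub>m j) *\<^sub>v v) = 0"
    using krylov_mat_det_zero_imp_annihilator[OF M v(1)] by blast
  have "lin_form l (pt_of_vec ((M ^\<^sub>m j) *\<^sub>v v)) = 0" for j
    using lin_form_pt_of_vec[OF l(1) mult_mat_vec_carrier[OF pow_carrier_mat[OF M] v(1)]] l(3)
    by simp
  then have "\<forall>x\<in>orbit (mat_apply N (of_alg_mat M)) (pt_of_vec v). lin_form l x = 0"
    by (auto simp: orbit_pt_of_vec[OF M v(1)])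
  with l(2) show False
    using lin_form_vanishing_on_dense[OF dense orbit_subset_proj_pts[OF v] l(1)] by simp
qed

lemma krylov_det_nonzero_imp_dense_orbit:
  assumes v: "v \<in> carrier_vec (Suc N)" "v \<noteq> 0\<^sub>v (Suc N)" "det (krylov_mat M v) \<noteq> 0"
    and dense: "zariski_dense N (orbit (mat_apply N (of_alg_mat M)) (pt_of_vec v))"
    and w: "w \<in> carrier_vec (Suc N)" "det (krylov_mat M w) \<noteq> 0"
  shows "zariski_dense N (orbit (mat_apply N (of_alg_mat M)) (pt_of_vec w))"
proof -
  obtain c where c: "c \<in> carrier_vec (Suc N)" "krylov_mat M v *\<^sub>v c = w"
    using mult_mat_vec_solvable[OF krylov_mat_carrier[OF M] v(3) w(1)] by blast
  define G where "G = poly_eval_mat M c"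
  have G: "G \<in> carrier_mat (Suc N) (Suc N)" "G * M = M * G" "G *\<^sub>v v = w"
    using M v(1) c poly_eval_mat_commute[OF M] poly_eval_mat_mult_vec[OF M v(1) c(1)]
    by (simp_all add: G_def)
  have "det G * det (krylov_mat M v) = det (krylov_mat M w)"
    using krylov_mat_commute[OF M G(1) v(1) G(2)] G(3)
      det_mult[OF G(1) krylov_mat_carrier[OF M, of v]] by simp
  with w(2) have det_G: "det G \<noteq> 0" by auto
  have "orbit (mat_apply N (of_alg_mat M)) (pt_of_vec w) =
      mat_apply N (of_alg_mat G) ` orbit (mat_apply N (of_alg_mat M)) (pt_of_vec v)"
    using orbit_pt_of_vec_commuting[OF M G(1,2) v(1)] G(3) by simp
  then show ?thesis
    using zariski_dense_linear_image[OF G(1) det_G dense orbit_subset_proj_pts[OF v(1,2)]] by simp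
qed

lemma dense_orbit_pts_contains_open:
  assumes "dense_orbit_pts N (mat_apply N (of_alg_mat M)) \<noteq> {}"
  shows "\<exists>U. zariski_open N U \<and> U \<noteq> {} \<and> U \<subseteq> dense_orbit_pts N (mat_apply N (of_alg_mat M))"
proof -
  let ?f = "mat_apply N (of_alg_mat M)"
  obtain P where P: "P \<in> proj_pts N" "zariski_dense N (orbit ?f P)"
    using assms by (auto simp: dense_orbit_pts_def)
  define v where "v = vec_of_pt (Suc N) P"
  have v: "v \<in> carrier_vec (Suc N)" "v \<noteq> 0\<^sub>v (Suc N)" "pt_of_vec v = P"
    using vec_of_pt_nonzero[OF P(1)] pt_of_vec_of_pt[OF P(1)] by (simp_all add: v_def)
  have dense_v: "zariski_dense N (orbit ?f (pt_of_vec v))"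
    using P(2) v(3) by simp
  have det_v: "det (krylov_mat M v) \<noteq> 0"
    by (rule dense_orbit_imp_krylov_det_nonzero[OF v(1,2) dense_v])
  let ?U = "{x \<in> proj_pts N. krylov_det N M x \<noteq> 0}"
  have "proj_pts N - ?U = zariski_zero N {krylov_det N M}"
    by (auto simp: zariski_zero_def)
  then have "zariski_open N ?U"
    unfolding zariski_open_def zariski_closed_def using homog_poly_krylov_det[OF M] by auto
  moreover have "P \<in> ?U"
    using P(1) det_v krylov_det_pt_of_vec[OF M v(1)] v(3) by simp
  moreover have "?U \<subseteq> dense_orbit_pts N ?f"
  proof
    fix x assume x: "x \<in> ?U"
    define w where "w = vec_of_pt (Suc N) x"
    have w: "w \<in> carrier_vec (Suc N)" "pt_of_vec w = x"
      using x pt_of_vec_of_pt by (simp_all add: w_def)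
    then have "det (krylov_mat M w) \<noteq> 0"
      using x krylov_det_pt_of_vec[OF M w(1)] by simp
    then have "zariski_dense N (orbit ?f x)"
      using krylov_det_nonzero_imp_dense_orbit[OF v(1,2) det_v dense_v w(1)] w(2) by simp
    with x show "x \<in> dense_orbit_pts N ?f"
      by (simp add: dense_orbit_pts_def)
  qed
  ultimately show ?thesis by blast
qed

end

lemma qbar_invertible_imp_alg_mat:
  assumes "qbar_invertible N A"
  obtains M where "M \<in> carrier_mat (Suc N) (Suc N)" "det M \<noteq> 0"
    "mat_apply N A = mat_apply N (of_alg_mat M)"
proof -
  obtain B where alg_B: "\<forall>i\<le>N. \<forall>j\<le>N. algebraic (B i j)"
    and BA: "\<forall>i\<le>N. \<forall>k\<le>N. (\<Sum>j\<le>N. B i j * A j k) = (if i = k then 1 else 0)"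
    using assms unfolding qbar_invertible_def by blast
  have alg_A: "\<forall>i\<le>N. \<forall>j\<le>N. algebraic (A i j)"
    using assms unfolding qbar_invertible_def by blast
  define M where "M = mat (Suc N) (Suc N) (\<lambda>(i, j). Abs_alg (A i j))"
  define MB where "MB = mat (Suc N) (Suc N) (\<lambda>(i, j). Abs_alg (B i j))"
  have M: "M \<in> carrier_mat (Suc N) (Suc N)" and MB: "MB \<in> carrier_mat (Suc N) (Suc N)"
    by (simp_all add: M_def MB_def)
  have "MB * M = 1\<^sub>m (Suc N)"
  proof (rule eq_matI)
    fix i k assume "i < dim_row (1\<^sub>m (Suc N))" "k < dim_col (1\<^sub>m (Suc N))"
    then have i: "i \<le> N" and k: "k \<le> N" by simp_all
    have "of_alg ((MB * M) $$ (i, k)) = (\<Sum>j\<le>N. B i j * A j k)"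
      using i k alg_A alg_B
      by (simp add: M_def MB_def scalar_prod_def atLeast0LessThan lessThan_Suc_atMost
          of_alg_hom.hom_sum of_alg_hom.hom_mult)
    also have "\<dots> = of_alg (1\<^sub>m (Suc N) $$ (i, k))"
      using BA i k by simp
    finally show "(MB * M) $$ (i, k) = 1\<^sub>m (Suc N) $$ (i, k)"
      by (simp add: of_alg_inject)
  qed (simp_all add: M_def MB_def)
  then have "det MB * det M = 1"
    using det_mult[OF MB M] by simp
  then have "det M \<noteq> 0" by auto
  moreover have "mat_apply N A = mat_apply N (of_alg_mat M)"
    using alg_A by (auto simp: mat_apply_def of_alg_mat_def M_def intro!: sum.cong ext)
  ultimately show ?thesis
    using that M by blast
qed

theorem lemma4p2:
  fixes N :: nat and A :: "nat \<Rightarrow> nat \<Rightarrow> complex"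
  assumes "qbar_invertible N A"
    and "dense_orbit_pts N (mat_apply N A) \<noteq> {}"
  shows "\<exists>U. zariski_open N U \<and> U \<noteq> {} \<and> U \<subseteq> dense_orbit_pts N (mat_apply N A)"
proof -
  obtain M where M: "M \<in> carrier_mat (Suc N) (Suc N)" "det M \<noteq> 0"
    and f: "mat_apply N A = mat_apply N (of_alg_mat M)"
    using qbar_invertible_imp_alg_mat[OF assms(1)] .
  show ?thesis
    using dense_orbit_pts_contains_open[OF M] assms(2) unfolding f .
qed

end
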